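(* Let $\mu_1,\mu_2,\mu$ be probability measures on a measurable space $(E,\mathscr B)$. Then for every $p>1$, $$\mathrm{Ent}(\mu_1|\mu_2)\le p\,\mathrm{Ent}(\mu_1|\mu)+(p-1)\log\int_E\Big(\frac{\mathrm d\mu}{\mathrm d\mu_2}\Big)^{\frac p{p-1}}\mathrm d\mu_2,$$ where the right-hand side is set to be $+\infty$ if $\frac{\mathrm d\mu_1}{\mathrm d\mu}$ or $\frac{\mathrm d\mu}{\mathrm d\mu_2}$ does not exist.
   Context: $\mathrm{Ent}(\nu|\lambda)=\int\log\frac{\mathrm d\nu}{\mathrm d\lambda}\,\mathrm d\nu$ if $\nu\ll\lambda$, and $+\infty$ otherwise. *)

theory Defs
  imports "HOL-Probability.Probability"
begin

definition eln :: "ennreal \<Rightarrow> ereal" where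
  "eln x = (if x = \<infinity> then \<infinity> else if x = 0 then -\<infinity> else ereal (ln (enn2real x)))"

text \<open>The integral is the Lebesgue integral in the extended sense:
  positive part minus negative part (the negative part is finite for probability measures).\<close>
definition Ent :: "'a measure \<Rightarrow> 'a measure \<Rightarrow> ereal" where
  "Ent \<nu> L =
    (if absolutely_continuous L \<nu> \<and> sets \<nu> = sets L then
       enn2ereal (\<integral>\<^sup>+ x. ennreal (ln (enn2real (RN_deriv L \<nu> x))) \<partial>\<nu>)
       - enn2ereal (\<integral>\<^sup>+ x. ennreal (- ln (enn2real (RN_deriv L \<nu> x))) \<partial>\<nu>)
     else \<infinity>)"

end

theory Submission
  imports Defs
begin

text \<open>Write F = d\<mu>1/d\<mu> and G = d\<mu>/d\<mu>2, so that d\<mu>1/d\<mu>2 = F G holds \<mu>1-a.e.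
  With z = \<integral> G^(p/(p-1)) d\<mu>2, the inequality ln t \<le> t - 1 for t = G^(1/(p-1)) / (F z) gives
  ln (F G) \<le> p ln F + (p - 1) ln z + (p - 1) (t - 1) pointwise, and changing the measure
  from \<mu>1 to \<mu> and then to \<mu>2 shows \<integral> t d\<mu>1 \<le> 1. Integrating over \<mu>1 yields the claim.
  The negative part of Ent(\<nu>|\<lambda>) equals \<integral> f max 0 (-ln f) d\<lambda> for f = d\<nu>/d\<lambda>, hence is at
  most \<lambda>(E) because t (-ln t) \<le> 1; so the right-hand side is never \<infinity> - \<infinity>, and it is +\<infinity>
  as soon as Ent(\<mu>1|\<mu>) or z is.\<close>

lemma absolutely_continuous_trans:
  "absolutely_continuous L M \<Longrightarrow> absolutely_continuous M N \<Longrightarrow> absolutely_continuous L N"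
  unfolding absolutely_continuous_def by blast

lemma mult_minus_ln_le_one:
  fixes t :: real
  assumes "0 \<le> t"
  shows "t * - ln t \<le> 1"
proof (cases "t = 0")
  case False
  with assms have t: "t > 0" by simp
  have "- ln t = ln (1 / t)" using t by (simp add: ln_div)
  also have "\<dots> \<le> 1 / t - 1" using t by (intro ln_le_minus_one) simp
  finally have "t * - ln t \<le> t * (1 / t - 1)" using t by (intro mult_left_mono) auto
  also have "\<dots> \<le> 1" using t by (simp add: field_simps)
  finally show ?thesis .
qed simp

lemma ennreal_mult_minus_ln_enn2real_le_one:
  fixes r :: ennreal
  shows "r * ennreal (- ln (enn2real r)) \<le> 1"
proof (cases r)
  case (real t)
  then show ?thesis using mult_minus_ln_le_one[of t] by (simp add: ennreal_mult'[symmetric])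
qed simp

text \<open>At r = \<infinity> these hold only through the conventions enn2real \<infinity> = 0, y / 0 = 0,
  0 powr a = 0 and \<infinity> * 0 = 0.\<close>

lemma ennreal_mult_divide_enn2real_le:
  fixes r :: ennreal and y :: real
  assumes "0 \<le> y"
  shows "r * ennreal (y / enn2real r) \<le> ennreal y"
proof (cases r)
  case (real t)
  then show ?thesis using assms by (cases "t = 0") (simp_all add: ennreal_mult'[symmetric])
qed simp

lemma ennreal_mult_enn2real_powr:
  fixes r :: ennreal
  shows "r * ennreal (enn2real r powr a) = ennreal (enn2real r powr (a + 1))"
proof (cases r)
  case (real t)
  then show ?thesis by (simp add: ennreal_mult'[symmetric] powr_add)
qed simp

lemma ln_mult_le_powr_divide:
  fixes a b c p :: real
  assumes "a > 0" "b > 0" "c > 0" "p > 1"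
  shows "ln (a * b) \<le> p * ln a + (p - 1) * ln c + (p - 1) * (b powr (1 / (p - 1)) / a / c - 1)"
proof -
  define t where "t = ln b / (p - 1) - ln a - ln c"
  have exp_t: "b powr (1 / (p - 1)) / a / c = exp t"
    using assms by (simp add: t_def powr_def exp_diff)
  have "t \<le> exp t - 1" using exp_ge_add_one_self[of t] by linarith
  then have "(p - 1) * t \<le> (p - 1) * (exp t - 1)" using assms by (intro mult_left_mono) auto
  moreover have "(p - 1) * t = ln b - (p - 1) * ln a - (p - 1) * ln c"
    using assms by (simp add: t_def field_simps)
  ultimately show ?thesis unfolding exp_t using assms by (simp add: ln_mult algebra_simps)
qed

lemma (in finite_measure) nn_integral_minus_ln_RN_deriv_finite:
  assumes "absolutely_continuous M N" "sets N = sets M"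
  shows "(\<integral>\<^sup>+ x. ennreal (- ln (enn2real (RN_deriv M N x))) \<partial>N) \<noteq> \<infinity>"
proof -
  have "(\<integral>\<^sup>+ x. ennreal (- ln (enn2real (RN_deriv M N x))) \<partial>N)
      = (\<integral>\<^sup>+ x. RN_deriv M N x * ennreal (- ln (enn2real (RN_deriv M N x))) \<partial>M)"
    using assms by (intro RN_deriv_nn_integral) auto
  also have "\<dots> \<le> (\<integral>\<^sup>+ x. 1 \<partial>M)"
    by (intro nn_integral_mono ennreal_mult_minus_ln_enn2real_le_one)
  also have "\<dots> < \<infinity>" by (simp add: less_top[symmetric])
  finally show ?thesis by simp
qed

lemma integrable_ln_RN_deriv_iff:
  assumes "finite_measure M" "absolutely_continuous M N" "sets N = sets M"
  shows "integrable N (\<lambda>x. ln (enn2real (RN_deriv M N x))) \<longleftrightarrow>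
    (\<integral>\<^sup>+ x. ennreal (ln (enn2real (RN_deriv M N x))) \<partial>N) \<noteq> \<infinity>"
proof -
  note [measurable_cong] = assms(3)
  show ?thesis
    using finite_measure.nn_integral_minus_ln_RN_deriv_finite[OF assms]
    unfolding real_integrable_def by simp
qed

lemma integrable_ln_RN_deriv_if_AE_le:
  assumes "finite_measure M" "absolutely_continuous M N" "sets N = sets M"
    and "integrable N h" "AE x in N. ln (enn2real (RN_deriv M N x)) \<le> h x"
  shows "integrable N (\<lambda>x. ln (enn2real (RN_deriv M N x)))"
proof -
  have "(\<integral>\<^sup>+ x. ennreal (ln (enn2real (RN_deriv M N x))) \<partial>N) \<le> (\<integral>\<^sup>+ x. ennreal (h x) \<partial>N)"
    using assms(5) by (intro nn_integral_mono_AE) (auto elim!: eventually_mono intro: ennreal_leI)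
  then show ?thesis
    using assms(4) integrable_ln_RN_deriv_iff[OF assms(1-3)] by (auto simp: real_integrable_def top_unique)
qed

lemma Ent_conv_integral:
  assumes "finite_measure M" "absolutely_continuous M N" "sets N = sets M"
  shows "Ent N M = (if integrable N (\<lambda>x. ln (enn2real (RN_deriv M N x)))
    then ereal (\<integral>x. ln (enn2real (RN_deriv M N x)) \<partial>N) else \<infinity>)"
proof -
  let ?f = "\<lambda>x. ln (enn2real (RN_deriv M N x))"
  have Ent: "Ent N M = enn2ereal (\<integral>\<^sup>+ x. ennreal (?f x) \<partial>N) - enn2ereal (\<integral>\<^sup>+ x. ennreal (- ?f x) \<partial>N)"
    using assms by (simp add: Ent_def)
  show ?thesis
  proof (cases "integrable N ?f")
    case True
    then obtain r q where "0 \<le> r" "0 \<le> q" "(\<integral>\<^sup>+ x. ennreal (?f x) \<partial>N) = ennreal r"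
      "(\<integral>\<^sup>+ x. ennreal (- ?f x) \<partial>N) = ennreal q" "(\<integral>x. ?f x \<partial>N) = r - q"
      by (rule integrableE)
    then show ?thesis using True by (simp add: Ent)
  next
    case False
    then show ?thesis
      using integrable_ln_RN_deriv_iff[OF assms] finite_measure.nn_integral_minus_ln_RN_deriv_finite[OF assms]
      by (auto simp: Ent)
  qed
qed

lemma (in sigma_finite_measure) AE_RN_deriv_pos:
  assumes "finite_measure N" "absolutely_continuous M N" "sets N = sets M"
  shows "AE x in N. 0 < enn2real (RN_deriv M N x)"
proof -
  obtain D where "AE x in M. RN_deriv M N x = ennreal (D x)" "AE x in N. 0 < D x"
    using real_RN_deriv[OF assms] by metis
  then have "AE x in N. RN_deriv M N x = ennreal (D x)" "AE x in N. 0 < D x"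
    using absolutely_continuous_AE[OF assms(3,2)] by auto
  then show ?thesis by eventually_elim simp
qed

lemma (in sigma_finite_measure) AE_RN_deriv_mult:
  assumes "sigma_finite_measure L"
    and "absolutely_continuous M L" "sets L = sets M"
    and "absolutely_continuous L N" "sets N = sets L"
  shows "AE x in M. RN_deriv M L x * RN_deriv L N x = RN_deriv M N x"
proof (rule RN_deriv_unique)
  note [measurable_cong] = assms(3)
  show "(\<lambda>x. RN_deriv M L x * RN_deriv L N x) \<in> borel_measurable M" by measurable
  have "density M (\<lambda>x. RN_deriv M L x * RN_deriv L N x)
      = density (density M (RN_deriv M L)) (RN_deriv L N)"
    by (rule density_density_eq[symmetric]) measurable
  also have "\<dots> = N"
    using density_RN_deriv[OF assms(2,3)] sigma_finite_measure.density_RN_deriv[OF assms(1,4,5)]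
    by simp
  finally show "density M (\<lambda>x. RN_deriv M L x * RN_deriv L N x) = N" .
qed

lemma AE_enn2real_RN_deriv_chain:
  assumes "sigma_finite_measure M" "finite_measure L" "finite_measure N"
    and "absolutely_continuous M L" "sets L = sets M"
    and "absolutely_continuous L N" "sets N = sets L"
  shows "AE x in N. 0 < enn2real (RN_deriv L N x) \<and> 0 < enn2real (RN_deriv M L x) \<and>
    enn2real (RN_deriv M N x) = enn2real (RN_deriv L N x) * enn2real (RN_deriv M L x)"
proof -
  interpret M: sigma_finite_measure M by fact
  interpret L: finite_measure L by fact
  have "AE x in N. 0 < enn2real (RN_deriv L N x)"
    using assms(3,6,7) by (rule L.AE_RN_deriv_pos)
  moreover have "AE x in L. 0 < enn2real (RN_deriv M L x)"
    using assms(2,4,5) by (rule M.AE_RN_deriv_pos)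
  then have "AE x in N. 0 < enn2real (RN_deriv M L x)"
    by (rule absolutely_continuous_AE[OF assms(7,6)])
  moreover have "AE x in M. RN_deriv M L x * RN_deriv L N x = RN_deriv M N x"
    using L.sigma_finite_measure_axioms assms(4-7) by (rule M.AE_RN_deriv_mult)
  then have "AE x in N. RN_deriv M L x * RN_deriv L N x = RN_deriv M N x"
    using absolutely_continuous_AE[OF _ absolutely_continuous_trans[OF assms(4,6)]] assms(5,7) by simp
  ultimately show ?thesis by eventually_elim (auto simp: enn2real_mult[symmetric] mult.commute)
qed

lemma nn_integral_RN_deriv_powr_divide_le:
  assumes "sigma_finite_measure M" "sigma_finite_measure L"
    and "absolutely_continuous M L" "sets L = sets M"
    and "absolutely_continuous L N" "sets N = sets L"
  shows "(\<integral>\<^sup>+ x. ennreal (enn2real (RN_deriv M L x) powr a / enn2real (RN_deriv L N x)) \<partial>N)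
    \<le> (\<integral>\<^sup>+ x. ennreal (enn2real (RN_deriv M L x) powr (a + 1)) \<partial>M)"
proof -
  interpret M: sigma_finite_measure M by fact
  interpret L: sigma_finite_measure L by fact
  note [measurable_cong] = assms(4)
  let ?g = "\<lambda>x. enn2real (RN_deriv M L x) powr a"
  have "(\<integral>\<^sup>+ x. ennreal (?g x / enn2real (RN_deriv L N x)) \<partial>N)
      = (\<integral>\<^sup>+ x. RN_deriv L N x * ennreal (?g x / enn2real (RN_deriv L N x)) \<partial>L)"
    using assms(5,6) by (intro L.RN_deriv_nn_integral) auto
  also have "\<dots> \<le> (\<integral>\<^sup>+ x. ennreal (?g x) \<partial>L)"
    by (intro nn_integral_mono ennreal_mult_divide_enn2real_le) simp
  also have "\<dots> = (\<integral>\<^sup>+ x. RN_deriv M L x * ennreal (?g x) \<partial>M)"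
    using assms(3,4) by (intro M.RN_deriv_nn_integral) auto
  also have "\<dots> = (\<integral>\<^sup>+ x. ennreal (enn2real (RN_deriv M L x) powr (a + 1)) \<partial>M)"
    by (simp only: ennreal_mult_enn2real_powr)
  finally show ?thesis .
qed

lemma nn_integral_RN_deriv_powr_nonzero:
  assumes "sigma_finite_measure M" "prob_space N" "absolutely_continuous M N" "sets N = sets M"
  shows "(\<integral>\<^sup>+ x. ennreal (enn2real (RN_deriv M N x) powr a) \<partial>M) \<noteq> 0"
proof
  interpret M: sigma_finite_measure M by fact
  interpret N: prob_space N by fact
  assume "(\<integral>\<^sup>+ x. ennreal (enn2real (RN_deriv M N x) powr a) \<partial>M) = 0"
  then have "AE x in M. enn2real (RN_deriv M N x) = 0"
    by (subst (asm) nn_integral_0_iff_AE) (auto simp: ennreal_eq_0_iff)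
  then have "AE x in N. enn2real (RN_deriv M N x) = 0"
    by (rule absolutely_continuous_AE[OF assms(4,3)])
  moreover have "AE x in N. 0 < enn2real (RN_deriv M N x)"
    using N.finite_measure_axioms assms(3,4) by (rule M.AE_RN_deriv_pos)
  ultimately have "AE x in N. False" by eventually_elim simp
  then show False by (simp add: N.AE_False)
qed

lemma nn_integral_RN_deriv_powr_ratio_le_one:
  fixes p z :: real
  assumes "sigma_finite_measure M" "sigma_finite_measure L"
    and "absolutely_continuous M L" "sets L = sets M"
    and "absolutely_continuous L N" "sets N = sets L" "p > 1"
    and "(\<integral>\<^sup>+ x. ennreal (enn2real (RN_deriv M L x) powr (p / (p - 1))) \<partial>M) = ennreal z" "z > 0"
  shows "(\<integral>\<^sup>+ x. ennreal (enn2real (RN_deriv M L x) powr (1 / (p - 1))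
    / enn2real (RN_deriv L N x) / z) \<partial>N) \<le> 1"
proof -
  note [measurable_cong] = assms(4,6)
  let ?r = "\<lambda>x. enn2real (RN_deriv M L x) powr (1 / (p - 1)) / enn2real (RN_deriv L N x)"
  have "1 / (p - 1) + 1 = p / (p - 1)" using \<open>p > 1\<close> by (simp add: field_simps)
  then have "(\<integral>\<^sup>+ x. ennreal (?r x) \<partial>N) \<le> ennreal z"
    using nn_integral_RN_deriv_powr_divide_le[OF assms(1-6), of "1 / (p - 1)"] assms(8) by simp
  then have "(\<integral>\<^sup>+ x. ennreal (?r x) \<partial>N) * ennreal (1 / z) \<le> ennreal z * ennreal (1 / z)"
    by (rule mult_right_mono) simp
  moreover have "(\<integral>\<^sup>+ x. ennreal (?r x / z) \<partial>N) = (\<integral>\<^sup>+ x. ennreal (?r x) \<partial>N) * ennreal (1 / z)"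
    by (subst nn_integral_multc[symmetric]) (auto simp: ennreal_mult'[symmetric])
  moreover have "ennreal z * ennreal (1 / z) = 1" using \<open>z > 0\<close> by (simp add: ennreal_mult[symmetric])
  ultimately show ?thesis by simp
qed

lemma Ent_le_integral_ln_RN_deriv:
  fixes p z :: real
  assumes "finite_measure M" "finite_measure L" "prob_space N"
    and "absolutely_continuous M L" "sets L = sets M"
    and "absolutely_continuous L N" "sets N = sets L" "p > 1"
    and integrable_F: "integrable N (\<lambda>x. ln (enn2real (RN_deriv L N x)))"
    and z: "(\<integral>\<^sup>+ x. ennreal (enn2real (RN_deriv M L x) powr (p / (p - 1))) \<partial>M) = ennreal z" "z > 0"
  shows "Ent N M \<le> ereal (p * (\<integral>x. ln (enn2real (RN_deriv L N x)) \<partial>N) + (p - 1) * ln z)"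
proof -
  interpret M: finite_measure M by fact
  interpret L: finite_measure L by fact
  interpret N: prob_space N by fact
  note [measurable_cong] = assms(5,7)
  define F where "F x = enn2real (RN_deriv L N x)" for x
  define G where "G x = enn2real (RN_deriv M L x)" for x
  define H where "H x = G x powr (1 / (p - 1)) / F x / z" for x
  define h where "h x = p * ln (F x) + (p - 1) * ln z + (p - 1) * (H x - 1)" for x
  have [measurable]: "H \<in> borel_measurable N" unfolding H_def F_def G_def by measurable
  have H_nonneg: "0 \<le> H x" for x using \<open>z > 0\<close> by (simp add: H_def F_def G_def)
  have nn_integral_H: "(\<integral>\<^sup>+ x. ennreal (H x) \<partial>N) \<le> 1"
    unfolding H_def F_def G_def using M.sigma_finite_measure_axioms L.sigma_finite_measure_axioms
    by (rule nn_integral_RN_deriv_powr_ratio_le_one) fact+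
  then have integrable_H: "integrable N H"
    using H_nonneg by (intro integrableI_nonneg) (auto simp: top_unique less_top[symmetric])
  have "(\<integral>x. H x \<partial>N) \<le> 1"
    using nn_integral_H H_nonneg integral_eq_nn_integral[where f=H and M=N] enn2real_mono[of _ 1] by auto
  then have "(p - 1) * ((\<integral>x. H x \<partial>N) - 1) \<le> 0"
    using \<open>p > 1\<close> by (intro mult_nonneg_nonpos) auto
  then have integral_h: "(\<integral>x. h x \<partial>N) \<le> p * (\<integral>x. ln (F x) \<partial>N) + (p - 1) * ln z"
    using integrable_H integrable_F by (simp add: h_def F_def N.prob_space)
  have integrable_h: "integrable N h"
    using integrable_H integrable_F unfolding h_def F_def by auto
  have "AE x in N. 0 < F x \<and> 0 < G x \<and> enn2real (RN_deriv M N x) = F x * G x"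
    using AE_enn2real_RN_deriv_chain[OF M.sigma_finite_measure_axioms assms(2)
        N.finite_measure_axioms assms(4-7)]
    unfolding F_def G_def .
  then have ln_le_h: "AE x in N. ln (enn2real (RN_deriv M N x)) \<le> h x"
  proof eventually_elim
    case (elim x)
    then show ?case
      using ln_mult_le_powr_divide[of "F x" "G x" z p] \<open>p > 1\<close> \<open>z > 0\<close> by (simp add: h_def H_def)
  qed
  have ac: "absolutely_continuous M N" "sets N = sets M"
    using absolutely_continuous_trans[OF assms(4,6)] assms(5,7) by simp_all
  have integrable_K: "integrable N (\<lambda>x. ln (enn2real (RN_deriv M N x)))"
    using assms(1) ac integrable_h ln_le_h by (rule integrable_ln_RN_deriv_if_AE_le)
  then have "Ent N M = ereal (\<integral>x. ln (enn2real (RN_deriv M N x)) \<partial>N)"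
    using Ent_conv_integral[OF assms(1) ac] by simp
  then show ?thesis
    using integral_mono_AE[OF integrable_K integrable_h ln_le_h] integral_h by (simp add: F_def)
qed

theorem lemma2p1:
  fixes \<mu>1 \<mu>2 \<mu> :: "'a measure" and p :: real
  assumes "prob_space \<mu>1" and "prob_space \<mu>2" and "prob_space \<mu>"
    and "sets \<mu>1 = sets \<mu>" and "sets \<mu>2 = sets \<mu>"
    and "p > 1"
  shows "Ent \<mu>1 \<mu>2 \<le>
    (if absolutely_continuous \<mu> \<mu>1 \<and> absolutely_continuous \<mu>2 \<mu> then
       ereal p * Ent \<mu>1 \<mu> + ereal (p - 1) *
         eln (\<integral>\<^sup>+ x. ennreal (enn2real (RN_deriv \<mu>2 \<mu> x) powr (p / (p - 1))) \<partial>\<mu>2)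
     else \<infinity>)"
proof (cases "absolutely_continuous \<mu> \<mu>1 \<and> absolutely_continuous \<mu>2 \<mu>")
  case True
  then have ac: "absolutely_continuous \<mu> \<mu>1" "absolutely_continuous \<mu>2 \<mu>" by auto
  have sets: "sets \<mu>1 = sets \<mu>" "sets \<mu> = sets \<mu>2" using assms(4,5) by simp_all
  have fin: "finite_measure \<mu>2" "finite_measure \<mu>"
    using assms(2,3) by (simp_all add: prob_space_def)
  define Z where "Z = (\<integral>\<^sup>+ x. ennreal (enn2real (RN_deriv \<mu>2 \<mu> x) powr (p / (p - 1))) \<partial>\<mu>2)"
  have "Z \<noteq> 0"
    unfolding Z_def using fin(1) assms(3) ac(2) sets(2)
    by (intro nn_integral_RN_deriv_powr_nonzero) (auto simp: finite_measure_def)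
  have Ent_\<mu>: "Ent \<mu>1 \<mu> = (if integrable \<mu>1 (\<lambda>x. ln (enn2real (RN_deriv \<mu> \<mu>1 x)))
      then ereal (\<integral>x. ln (enn2real (RN_deriv \<mu> \<mu>1 x)) \<partial>\<mu>1) else \<infinity>)"
    using fin(2) ac(1) sets(1) by (rule Ent_conv_integral)
  show ?thesis
  proof (cases "Ent \<mu>1 \<mu> = \<infinity> \<or> Z = \<infinity>")
    case True
    then show ?thesis
      using Ent_\<mu> \<open>Z \<noteq> 0\<close> \<open>p > 1\<close> by (auto simp: Z_def[symmetric] eln_def)
  next
    case False
    then obtain z where z: "Z = ennreal z" "z > 0"
      using \<open>Z \<noteq> 0\<close> by (cases Z) (auto simp: top_unique)
    have integrable: "integrable \<mu>1 (\<lambda>x. ln (enn2real (RN_deriv \<mu> \<mu>1 x)))"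
      using False Ent_\<mu> by (auto split: if_splits)
    show ?thesis
      using Ent_le_integral_ln_RN_deriv[OF fin assms(1) ac(2) sets(2) ac(1) sets(1) \<open>p > 1\<close>
          integrable z(1)[unfolded Z_def] z(2)] Ent_\<mu> integrable z True
      by (simp add: Z_def[symmetric] eln_def)
  qed
qed auto

end
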